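(* Let $\rho>0$, $\xi\in\mathbb{R}$, and $H=\frac{1}{2(1+\rho u^2)}\big(u^2(P_u^2+P_y^2)+\xi\big)$ on $(u,y)\in(0,\infty)\times\mathbb{R}$. On the level set $H=E$, $P_y=L>0$, if $2E<\xi$ and $2\rho E>L^2$, the projections to the $(u,y)$-plane of the trajectories of the Hamiltonian flow have equation $$u^2-\frac{2\rho E-L^2}{L^2}(y-y_0)^2=u_*^2,\qquad u\in(u_*,+\infty),$$ for some $y_0\in\mathbb{R}$, where $u_*=\sqrt{\frac{\xi-2E}{2\rho E-L^2}}$. *)

theory Defs
  imports "HOL-Analysis.Analysis"
begin

definition hamH :: "real \<Rightarrow> real \<Rightarrow> real \<Rightarrow> real \<Rightarrow> real \<Rightarrow> real \<Rightarrow> real" where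
  "hamH \<rho> \<xi> u y pu py = (u\<^sup>2 * (pu\<^sup>2 + py\<^sup>2) + \<xi>) / (2 * (1 + \<rho> * u\<^sup>2))"

definition hamiltonian_trajectory ::
  "(real \<Rightarrow> real \<Rightarrow> real \<Rightarrow> real \<Rightarrow> real) \<Rightarrow> real set \<Rightarrow>
   (real \<Rightarrow> real) \<Rightarrow> (real \<Rightarrow> real) \<Rightarrow> (real \<Rightarrow> real) \<Rightarrow> (real \<Rightarrow> real) \<Rightarrow> bool" where
  "hamiltonian_trajectory H T u y pu py \<longleftrightarrow>
    (\<forall>t\<in>T.
      (u has_real_derivative deriv (\<lambda>p. H (u t) (y t) p (py t)) (pu t)) (at t) \<and>
      (y has_real_derivative deriv (\<lambda>q. H (u t) (y t) (pu t) q) (py t)) (at t) \<and>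
      (pu has_real_derivative - deriv (\<lambda>x. H x (y t) (pu t) (py t)) (u t)) (at t) \<and>
      (py has_real_derivative - deriv (\<lambda>x. H (u t) x (pu t) (py t)) (y t)) (at t))"

end

theory Submission
  imports Defs
begin

text \<open>Since \<open>H\<close> does not depend on \<open>y\<close>, the momentum \<open>P_y = L\<close> is conserved, and on the level
  set \<open>H = E\<close> the quantity \<open>y - L/(2\<rho>E - L\<^sup>2) \<cdot> u P_u\<close> is a second first integral.
  Calling its value \<open>y\<^sub>0\<close>, the energy relation \<open>u\<^sup>2(P_u\<^sup>2 + L\<^sup>2) + \<xi> = 2E(1 + \<rho>u\<^sup>2)\<close> expresses
  \<open>u\<^sup>2P_u\<^sup>2\<close> through \<open>u\<^sup>2\<close>; eliminating \<open>u P_u\<close> between the two relations gives the hyperbola,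
  and \<open>u > 0\<close> selects its branch \<open>u \<ge> u\<^sub>*\<close>.\<close>

lemma hamH_has_derivative_u:
  assumes "1 + \<rho> * u\<^sup>2 \<noteq> 0"
  shows "((\<lambda>x. hamH \<rho> \<xi> x y p q) has_real_derivative
           u * (p\<^sup>2 + q\<^sup>2 - \<rho> * \<xi>) / (1 + \<rho> * u\<^sup>2)\<^sup>2) (at u)"
  unfolding hamH_def
  by (rule derivative_eq_intros refl)+ (use assms in \<open>simp_all add: divide_simps\<close>, algebra)

lemma hamH_has_derivative_pu:
  assumes "1 + \<rho> * u\<^sup>2 \<noteq> 0"
  shows "((\<lambda>p. hamH \<rho> \<xi> u y p q) has_real_derivative u\<^sup>2 * p / (1 + \<rho> * u\<^sup>2)) (at p)"
  unfolding hamH_def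
  by (rule derivative_eq_intros refl)+ (use assms in \<open>simp_all add: divide_simps\<close>)

lemma hamH_has_derivative_py:
  assumes "1 + \<rho> * u\<^sup>2 \<noteq> 0"
  shows "((\<lambda>q. hamH \<rho> \<xi> u y p q) has_real_derivative u\<^sup>2 * q / (1 + \<rho> * u\<^sup>2)) (at q)"
  unfolding hamH_def
  by (rule derivative_eq_intros refl)+ (use assms in \<open>simp_all add: divide_simps\<close>)

lemma hamH_eq_iff:
  assumes "\<rho> \<ge> 0"
  shows "hamH \<rho> \<xi> u y p q = E \<longleftrightarrow> u\<^sup>2 * (p\<^sup>2 + q\<^sup>2) + \<xi> = 2 * E * (1 + \<rho> * u\<^sup>2)"
proof -
  have "1 + \<rho> * u\<^sup>2 > 0" using assms by (simp add: add_pos_nonneg)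
  then show ?thesis unfolding hamH_def by (auto simp: field_simps)
qed

lemma hamiltonian_trajectory_hamH_equations:
  assumes "\<rho> \<ge> 0" and "hamiltonian_trajectory (hamH \<rho> \<xi>) T u y pu py" and "t \<in> T"
  defines "D \<equiv> 1 + \<rho> * (u t)\<^sup>2"
  shows "(u has_real_derivative (u t)\<^sup>2 * pu t / D) (at t)"
    and "(y has_real_derivative (u t)\<^sup>2 * py t / D) (at t)"
    and "(pu has_real_derivative - (u t * ((pu t)\<^sup>2 + (py t)\<^sup>2 - \<rho> * \<xi>) / D\<^sup>2)) (at t)"
proof -
  have "D \<noteq> 0" unfolding D_def using assms(1) add_pos_nonneg[of 1 "\<rho> * (u t)\<^sup>2"] by simp
  note equations = assms(2)[unfolded hamiltonian_trajectory_def, rule_format, OF assms(3)]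
  show "(u has_real_derivative (u t)\<^sup>2 * pu t / D) (at t)"
    using equations DERIV_imp_deriv[OF hamH_has_derivative_pu] \<open>D \<noteq> 0\<close> unfolding D_def by metis
  show "(y has_real_derivative (u t)\<^sup>2 * py t / D) (at t)"
    using equations DERIV_imp_deriv[OF hamH_has_derivative_py] \<open>D \<noteq> 0\<close> unfolding D_def by metis
  show "(pu has_real_derivative - (u t * ((pu t)\<^sup>2 + (py t)\<^sup>2 - \<rho> * \<xi>) / D\<^sup>2)) (at t)"
    using equations DERIV_imp_deriv[OF hamH_has_derivative_u] \<open>D \<noteq> 0\<close> unfolding D_def by metis
qed

lemma hamH_first_integral_has_derivative:
  assumes "\<rho> \<ge> 0" and "hamiltonian_trajectory (hamH \<rho> \<xi>) T u y pu py" and "t \<in> T"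
    and "hamH \<rho> \<xi> (u t) (y t) (pu t) (py t) = E" and "py t = L" and "2 * \<rho> * E - L\<^sup>2 \<noteq> 0"
  shows "((\<lambda>s. y s - L / (2 * \<rho> * E - L\<^sup>2) * (u s * pu s)) has_real_derivative 0) (at t)"
proof -
  define a where "a = 2 * \<rho> * E - L\<^sup>2"
  define D where "D = 1 + \<rho> * (u t)\<^sup>2"
  define U where "U = u t"
  define P where "P = pu t"
  have "D > 0" unfolding D_def using assms(1) by (simp add: add_pos_nonneg)
  have energy: "U\<^sup>2 * (P\<^sup>2 + L\<^sup>2) + \<xi> = 2 * E * D"
    using assms(4,5) hamH_eq_iff[OF assms(1)] unfolding U_def P_def D_def by simp
  note equations = hamiltonian_trajectory_hamH_equations[OF assms(1-3), folded D_def U_def P_def,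
      unfolded assms(5)]
  have "((\<lambda>s. y s - L / a * (u s * pu s)) has_real_derivative
          U\<^sup>2 * L / D - L / a * (U\<^sup>2 * P / D * P + U * - (U * (P\<^sup>2 + L\<^sup>2 - \<rho> * \<xi>) / D\<^sup>2))) (at t)"
    by (rule derivative_eq_intros equations refl | simp add: U_def P_def)+
  \<comment> \<open>this is \<open>\<rho>\<close> times the energy relation\<close>
  moreover have "a * D - P\<^sup>2 * D + (P\<^sup>2 + L\<^sup>2 - \<rho> * \<xi>) = 0"
    using energy unfolding a_def D_def U_def by algebra
  moreover have "U\<^sup>2 * L / D - L / a * (U\<^sup>2 * P / D * P + U * - (U * (P\<^sup>2 + L\<^sup>2 - \<rho> * \<xi>) / D\<^sup>2))
      = L * U\<^sup>2 / (a * D\<^sup>2) * (a * D - P\<^sup>2 * D + (P\<^sup>2 + L\<^sup>2 - \<rho> * \<xi>))"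
    using \<open>D > 0\<close> assms(6) unfolding a_def by (simp add: field_simps power2_eq_square)
  ultimately show ?thesis unfolding a_def by simp
qed

lemma hyperbola_of_first_integrals:
  fixes \<rho> \<xi> E L u P y y0 :: real
  defines "a \<equiv> 2 * \<rho> * E - L\<^sup>2"
  assumes "a \<noteq> 0" and "L \<noteq> 0"
    and energy: "u\<^sup>2 * (P\<^sup>2 + L\<^sup>2) + \<xi> = 2 * E * (1 + \<rho> * u\<^sup>2)"
    and integral: "y - y0 = L / a * (u * P)"
  shows "u\<^sup>2 - a / L\<^sup>2 * (y - y0)\<^sup>2 = (\<xi> - 2 * E) / a"
proof -
  have "u\<^sup>2 * P\<^sup>2 = a * u\<^sup>2 - (\<xi> - 2 * E)"
    using energy unfolding a_def by (simp add: algebra_simps)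
  moreover have "a / L\<^sup>2 * (y - y0)\<^sup>2 = u\<^sup>2 * P\<^sup>2 / a"
    unfolding integral using assms(2,3) by (simp add: field_simps power2_eq_square)
  ultimately show ?thesis using assms(2) by (simp add: field_simps)
qed

theorem proposition16:
  fixes \<rho> \<xi> E L :: real and T :: "real set"
    and u y pu py :: "real \<Rightarrow> real"
  assumes rho_pos: "\<rho> > 0"
    and L_pos: "L > 0"
    and E1: "2 * E < \<xi>"
    and E2: "2 * \<rho> * E > L\<^sup>2"
    and T_open: "open T" and T_interval: "is_interval T" and T_ne: "T \<noteq> {}"
    and traj: "hamiltonian_trajectory (hamH \<rho> \<xi>) T u y pu py"
    and u_pos: "\<forall>t\<in>T. u t > 0"
    and level: "\<forall>t\<in>T. hamH \<rho> \<xi> (u t) (y t) (pu t) (py t) = E"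
    and mom: "\<forall>t\<in>T. py t = L"
  shows "\<exists>y0::real. \<forall>t\<in>T.
           (u t)\<^sup>2 - (2 * \<rho> * E - L\<^sup>2) / L\<^sup>2 * (y t - y0)\<^sup>2
             = (sqrt ((\<xi> - 2 * E) / (2 * \<rho> * E - L\<^sup>2)))\<^sup>2
           \<and> u t \<ge> sqrt ((\<xi> - 2 * E) / (2 * \<rho> * E - L\<^sup>2))"
proof -
  define a where "a = 2 * \<rho> * E - L\<^sup>2"
  have "a > 0" and "\<xi> - 2 * E > 0" using E1 E2 unfolding a_def by auto
  define g where "g s = y s - L / a * (u s * pu s)" for s
  have "(g has_real_derivative 0) (at t within T)" if "t \<in> T" for t
    using hamH_first_integral_has_derivative[OF less_imp_le[OF rho_pos] traj that]
      level mom that \<open>a > 0\<close> unfolding g_def a_def by (auto intro: has_field_derivative_at_within)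
  then obtain y0 where y0: "g t = y0" if "t \<in> T" for t
    using has_field_derivative_zero_constant[OF is_interval_convex[OF T_interval]] by metis
  have hyperbola: "(u t)\<^sup>2 - a / L\<^sup>2 * (y t - y0)\<^sup>2 = (\<xi> - 2 * E) / a" if "t \<in> T" for t
  proof -
    have "(u t)\<^sup>2 * ((pu t)\<^sup>2 + L\<^sup>2) + \<xi> = 2 * E * (1 + \<rho> * (u t)\<^sup>2)"
      using level mom that hamH_eq_iff[OF less_imp_le[OF rho_pos]] by metis
    moreover have "y t - y0 = L / a * (u t * pu t)" using y0[OF that] unfolding g_def by simp
    ultimately show ?thesis
      using hyperbola_of_first_integrals \<open>a > 0\<close> L_pos unfolding a_def by simp
  qed
  show ?thesis
  proof (unfold a_def[symmetric], intro exI ballI conjI)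
    fix t assume "t \<in> T"
    have "(sqrt ((\<xi> - 2 * E) / a))\<^sup>2 = (\<xi> - 2 * E) / a"
      using \<open>a > 0\<close> \<open>\<xi> - 2 * E > 0\<close> by simp
    then show "(u t)\<^sup>2 - a / L\<^sup>2 * (y t - y0)\<^sup>2 = (sqrt ((\<xi> - 2 * E) / a))\<^sup>2"
      using hyperbola[OF \<open>t \<in> T\<close>] by simp
    have "a / L\<^sup>2 * (y t - y0)\<^sup>2 \<ge> 0" using \<open>a > 0\<close> by simp
    then have "(\<xi> - 2 * E) / a \<le> (u t)\<^sup>2" using hyperbola[OF \<open>t \<in> T\<close>] by linarith
    then show "sqrt ((\<xi> - 2 * E) / a) \<le> u t"
      using real_sqrt_le_mono u_pos \<open>t \<in> T\<close> by fastforce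
  qed
qed

end
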